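(* Fix $\Delta>0$. In the $\mathrm{EDD}(\lambda)$ model with a global clock, the probability that a run of the CORE$(\Delta)$-Message-Chain hybrid protocol is correct is at least $(1-e^{-\lambda\Delta})^n$.
   Context: Agents $i_0,i_1,\ldots,i_n$ share an accurate global clock and are connected by a complete reliable network; the delay of each message is an independent exponential random variable with parameter $\lambda$. At time $0$ the supervisor $i_0$ receives an external input. The CORE$(\Delta)$-Message-Chain hybrid protocol: at time $0$, $i_0$ sends a "trigger" message to each of $i_1,\ldots,i_n$ and additionally sends an "act" message to $i_1$. A worker $i_k$ that receives a chain message (the "act" message for $i_1$, or the chain message from $i_{k-1}$ for $k\ge2$) before having acted performs its action $\alpha_k$ immediately, sends a chain message to $i_{k+1}$ (if $k<n$), and terminates. Until then, $i_k$ follows CORE$(\Delta)$: upon receiving the trigger it waits until the global time is at least $\Delta$ and then performs $\alpha_k$ (immediately if the trigger arrives after $\Delta$) and terminates; a terminated agent does not propagate the chain. With $t_k$ the time at which $i_k$ performs $\alpha_k$, a run is correct if $t_1\le t_2\le\cdots\le t_n<\infty$. *)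

theory Defs
  imports "HOL-Probability.Probability"
begin

text \<open>Trig k: trigger from i0 to worker k (1 \<le> k \<le> n);
  Act: act message from i0 to worker 1;
  Chain k: chain message from worker k to worker k+1 (1 \<le> k \<le> n-1).\<close>
datatype msg = Trig nat | Act | Chain nat

definition msgs :: "nat \<Rightarrow> msg set" where
  "msgs n = Trig ` {1..n} \<union> {Act} \<union> Chain ` {1..<n}"

text \<open>Given the delay of every (potential) message, compute for worker k
  the pair (t_k, b_k) where t_k is the time worker k performs its action and
  b_k says whether it acted upon a chain message (and hence propagates the
  chain).  Index 0 is the supervisor, which "sends the chain" at time 0.\<close>
fun hybrid :: "real \<Rightarrow> (msg \<Rightarrow> real) \<Rightarrow> nat \<Rightarrow> real \<times> bool" where
  "hybrid \<Delta> d 0 = (0, True)"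
| "hybrid \<Delta> d (Suc k) =
     (let (tp, cp) = hybrid \<Delta> d k;
          core = max (d (Trig (Suc k))) \<Delta>;
          delay = (if k = 0 then d Act else d (Chain k))
      in if cp \<and> tp + delay \<le> core then (tp + delay, True) else (core, False))"

definition act_time :: "real \<Rightarrow> (msg \<Rightarrow> real) \<Rightarrow> nat \<Rightarrow> real" where
  "act_time \<Delta> d k = fst (hybrid \<Delta> d k)"

definition correct_run :: "real \<Rightarrow> nat \<Rightarrow> (msg \<Rightarrow> real) \<Rightarrow> bool" where
  "correct_run \<Delta> n d \<longleftrightarrow> (\<forall>k\<in>{1..<n}. act_time \<Delta> d k \<le> act_time \<Delta> d (Suc k))"

end

theory Submission
  imports Defs
begin

text \<open>If every trigger arrives by time \<Delta> and every chain message has nonnegative delay, the run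
  is correct: each worker acts no later than its CORE time, which is then exactly \<Delta>, while the
  next worker acts either at its own CORE time (at least \<Delta>) or upon the chain message, which was
  sent when its predecessor acted. By independence, this event has probability
  \<open>(1 - exp (-\<lambda>\<Delta>))^n\<close>, one factor per trigger.\<close>

definition acted_on_chain :: "real \<Rightarrow> (msg \<Rightarrow> real) \<Rightarrow> nat \<Rightarrow> bool" where
  "acted_on_chain \<Delta> d k = snd (hybrid \<Delta> d k)"

definition core_time :: "real \<Rightarrow> (msg \<Rightarrow> real) \<Rightarrow> nat \<Rightarrow> real" where
  "core_time \<Delta> d k = max (d (Trig k)) \<Delta>"

definition chain_delay :: "(msg \<Rightarrow> real) \<Rightarrow> nat \<Rightarrow> real" where
  "chain_delay d k = (if k = 0 then d Act else d (Chain k))"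

lemma act_time_0 [simp]: "act_time \<Delta> d 0 = 0"
  and acted_on_chain_0 [simp]: "acted_on_chain \<Delta> d 0"
  by (simp_all add: act_time_def acted_on_chain_def)

lemma act_time_Suc:
  "act_time \<Delta> d (Suc k) =
    (if acted_on_chain \<Delta> d k \<and> act_time \<Delta> d k + chain_delay d k \<le> core_time \<Delta> d (Suc k)
     then act_time \<Delta> d k + chain_delay d k else core_time \<Delta> d (Suc k))"
  by (simp add: act_time_def acted_on_chain_def core_time_def chain_delay_def Let_def
      split: prod.split)

lemma acted_on_chain_Suc:
  "acted_on_chain \<Delta> d (Suc k) \<longleftrightarrow>
    acted_on_chain \<Delta> d k \<and> act_time \<Delta> d k + chain_delay d k \<le> core_time \<Delta> d (Suc k)"
  by (simp add: act_time_def acted_on_chain_def core_time_def chain_delay_def Let_def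
      split: prod.split)

lemma act_time_Suc_le_core_time: "act_time \<Delta> d (Suc k) \<le> core_time \<Delta> d (Suc k)"
  by (simp add: act_time_Suc)

lemma act_time_le_act_time_Suc:
  assumes "act_time \<Delta> d k \<le> core_time \<Delta> d (Suc k)" and "0 \<le> chain_delay d k"
  shows "act_time \<Delta> d k \<le> act_time \<Delta> d (Suc k)"
  using assms by (simp add: act_time_Suc)

lemma correct_run_if_triggers_by_deadline:
  assumes trig: "\<And>k. k \<in> {1..<n} \<Longrightarrow> d (Trig k) \<le> \<Delta>"
    and chain: "\<And>k. k \<in> {1..<n} \<Longrightarrow> 0 \<le> d (Chain k)"
  shows "correct_run \<Delta> n d"
  unfolding correct_run_def
proof
  fix k assume k: "k \<in> {1..<n}"
  then obtain j where j: "k = Suc j" by (cases k) auto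
  have "act_time \<Delta> d k \<le> core_time \<Delta> d k"
    using act_time_Suc_le_core_time j by simp
  also have "\<dots> = \<Delta>" using trig[OF k] by (simp add: core_time_def)
  also have "\<dots> \<le> core_time \<Delta> d (Suc k)" by (simp add: core_time_def)
  finally show "act_time \<Delta> d k \<le> act_time \<Delta> d (Suc k)"
    using k chain[OF k] by (intro act_time_le_act_time_Suc) (simp_all add: chain_delay_def)
qed

fun on_time :: "real \<Rightarrow> msg \<Rightarrow> real set" where
  "on_time \<Delta> (Trig _) = {..\<Delta>}"
| "on_time \<Delta> _ = {0<..}"

lemma correct_run_if_on_time:
  assumes "\<And>m. m \<in> msgs n \<Longrightarrow> d m \<in> on_time \<Delta> m"
  shows "correct_run \<Delta> n d"
proof (rule correct_run_if_triggers_by_deadline)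
  fix k assume "k \<in> {1..<n}"
  then show "d (Trig k) \<le> \<Delta>" "0 \<le> d (Chain k)"
    using assms[of "Trig k"] assms[of "Chain k"] by (auto simp: msgs_def)
qed

lemma measurable_act_time:
  assumes D: "\<And>m. m \<in> msgs n \<Longrightarrow> D m \<in> borel_measurable M" and "k \<le> n"
  shows "(\<lambda>\<omega>. act_time \<Delta> (\<lambda>m. D m \<omega>) k) \<in> borel_measurable M"
    and "(\<lambda>\<omega>. acted_on_chain \<Delta> (\<lambda>m. D m \<omega>) k) \<in> measurable M (count_space UNIV)"
proof -
  have "(\<lambda>\<omega>. act_time \<Delta> (\<lambda>m. D m \<omega>) k) \<in> borel_measurable M \<and>
      (\<lambda>\<omega>. acted_on_chain \<Delta> (\<lambda>m. D m \<omega>) k) \<in> measurable M (count_space UNIV)"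
    using \<open>k \<le> n\<close>
  proof (induction k)
    case (Suc k)
    then have IH: "(\<lambda>\<omega>. act_time \<Delta> (\<lambda>m. D m \<omega>) k) \<in> borel_measurable M \<and>
        (\<lambda>\<omega>. acted_on_chain \<Delta> (\<lambda>m. D m \<omega>) k) \<in> measurable M (count_space UNIV)"
      by simp
    note [measurable] = IH[THEN conjunct1] IH[THEN conjunct2]
    have [measurable]: "(\<lambda>\<omega>. core_time \<Delta> (\<lambda>m. D m \<omega>) (Suc k)) \<in> borel_measurable M"
      using D[of "Trig (Suc k)"] Suc.prems by (simp add: core_time_def msgs_def)
    have [measurable]: "(\<lambda>\<omega>. chain_delay (\<lambda>m. D m \<omega>) k) \<in> borel_measurable M"
      using D[of Act] D[of "Chain k"] Suc.prems
      by (cases "k = 0") (simp_all add: chain_delay_def msgs_def)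
    show ?case
      unfolding act_time_Suc acted_on_chain_Suc by measurable
  qed simp
  then show "(\<lambda>\<omega>. act_time \<Delta> (\<lambda>m. D m \<omega>) k) \<in> borel_measurable M"
    and "(\<lambda>\<omega>. acted_on_chain \<Delta> (\<lambda>m. D m \<omega>) k) \<in> measurable M (count_space UNIV)"
    by simp_all
qed

lemma sets_correct_run:
  assumes "\<And>m. m \<in> msgs n \<Longrightarrow> D m \<in> borel_measurable M"
  shows "{\<omega> \<in> space M. correct_run \<Delta> n (\<lambda>m. D m \<omega>)} \<in> sets M"
  unfolding correct_run_def
proof (rule sets.sets_Collect_finite_All)
  fix k assume "k \<in> {1..<n}"
  then have [measurable]: "(\<lambda>\<omega>. act_time \<Delta> (\<lambda>m. D m \<omega>) k) \<in> borel_measurable M"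
    "(\<lambda>\<omega>. act_time \<Delta> (\<lambda>m. D m \<omega>) (Suc k)) \<in> borel_measurable M"
    using measurable_act_time(1)[OF assms] by simp_all
  show "{\<omega> \<in> space M. act_time \<Delta> (\<lambda>m. D m \<omega>) k \<le> act_time \<Delta> (\<lambda>m. D m \<omega>) (Suc k)} \<in> sets M"
    by measurable
qed simp

lemma prod_msgs:
  "(\<Prod>m\<in>msgs n. f m) = (\<Prod>k=1..n. f (Trig k)) * f Act * (\<Prod>k=1..<n. f (Chain k))"
proof -
  have "msgs n = Trig ` {1..n} \<union> insert Act (Chain ` {1..<n})"
    by (auto simp: msgs_def)
  then have "(\<Prod>m\<in>msgs n. f m) =
      (\<Prod>m\<in>Trig ` {1..n}. f m) * (\<Prod>m\<in>insert Act (Chain ` {1..<n}). f m)"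
    by (simp only:) (rule prod.union_disjoint, auto)
  also have "\<dots> = (\<Prod>m\<in>Trig ` {1..n}. f m) * (f Act * (\<Prod>m\<in>Chain ` {1..<n}. f m))"
    by (subst prod.insert) auto
  finally show ?thesis by (simp add: prod.reindex inj_on_def mult.assoc)
qed

lemma (in prob_space) prob_all_on_time:
  assumes indep: "indep_vars (\<lambda>_. borel) D (msgs n)"
    and exp: "\<And>m. m \<in> msgs n \<Longrightarrow> distributed M lborel (D m) (exponential_density l)"
    and "l > 0" and "\<Delta> \<ge> 0"
  shows "prob (\<Inter>m\<in>msgs n. D m -` on_time \<Delta> m \<inter> space M) = (1 - exp (- l * \<Delta>)) ^ n"
proof -
  have trig_in: "Trig k \<in> msgs n" if "k \<in> {1..n}" for k
    using that by (simp add: msgs_def)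
  have chain_in: "Chain k \<in> msgs n" if "k \<in> {1..<n}" for k
    using that by (simp add: msgs_def)
  have act_in: "Act \<in> msgs n"
    by (simp add: msgs_def)
  have trig: "prob (D (Trig k) -` {..\<Delta>} \<inter> space M) = 1 - exp (- l * \<Delta>)" if "k \<in> {1..n}" for k
    using exponential_distributedD_le[OF exp[OF trig_in[OF that]] \<open>\<Delta> \<ge> 0\<close> \<open>l > 0\<close>]
    by (simp add: vimage_def Int_def conj_commute mult.commute)
  have positive: "prob (D m -` {0<..} \<inter> space M) = 1" if "m \<in> msgs n" for m
    using exponential_distributedD_gt[OF exp[OF that] order_refl \<open>l > 0\<close>]
    by (simp add: vimage_def Int_def conj_commute)
  have "prob (\<Inter>m\<in>msgs n. D m -` on_time \<Delta> m \<inter> space M) =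
      (\<Prod>m\<in>msgs n. prob (D m -` on_time \<Delta> m \<inter> space M))"
    by (rule indep_varsD_finite[OF indep])
      (auto simp: msgs_def elim: on_time.elims)
  also have "\<dots> = (1 - exp (- l * \<Delta>)) ^ n"
    using trig positive trig_in chain_in act_in by (simp add: prod_msgs)
  finally show ?thesis .
qed

theorem theorem4:
  fixes M :: "'a measure" and D :: "msg \<Rightarrow> 'a \<Rightarrow> real"
    and l \<Delta> :: real and n :: nat
  assumes "prob_space M"
    and "l > 0" and "\<Delta> > 0"
    and "prob_space.indep_vars M (\<lambda>_. borel) D (msgs n)"
    and "\<And>m. m \<in> msgs n \<Longrightarrow> distributed M lborel (D m) (exponential_density l)"
  shows "measure M {\<omega> \<in> space M. correct_run \<Delta> n (\<lambda>m. D m \<omega>)}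
           \<ge> (1 - exp (- l * \<Delta>)) ^ n"
proof -
  interpret prob_space M by fact
  have "D m \<in> borel_measurable M" if "m \<in> msgs n" for m
    using assms(4) that by (auto simp: indep_vars_def2)
  then have correct_sets: "{\<omega> \<in> space M. correct_run \<Delta> n (\<lambda>m. D m \<omega>)} \<in> sets M"
    by (rule sets_correct_run)
  have "Act \<in> msgs n" by (simp add: msgs_def)
  then have "(\<Inter>m\<in>msgs n. D m -` on_time \<Delta> m \<inter> space M)
      \<subseteq> {\<omega> \<in> space M. correct_run \<Delta> n (\<lambda>m. D m \<omega>)}"
    by (auto intro: correct_run_if_on_time)
  then have "prob (\<Inter>m\<in>msgs n. D m -` on_time \<Delta> m \<inter> space M)
      \<le> prob {\<omega> \<in> space M. correct_run \<Delta> n (\<lambda>m. D m \<omega>)}"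
    using correct_sets by (rule finite_measure_mono)
  then show ?thesis
    using prob_all_on_time[OF assms(4,5,2)] \<open>\<Delta> > 0\<close> by simp
qed

end
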